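(* Let $\alpha_1,\alpha_2,\alpha_3:\mathbb N\to[0,\infty)$ be non-negative, bounded and increasing functions with $\alpha_1(0)=\alpha_2(0)=\alpha_3(0)=0$ and $\lim_{c\to\infty}(\alpha_1(c)+\alpha_2(c))<1$, and let $\lambda>0$. Consider the equation $w(c)=\min\{\alpha_1(c)w(c+1)+\alpha_2(c)w(c-1)+\alpha_3(c);\ \lambda\},\qquad c\in\mathbb N,\qquad(\ast)$ where the term $\alpha_2(0)w(-1)$ is taken to be $0$. Then: (a) equation $(\ast)$ has exactly one bounded solution $w:\mathbb N\to\mathbb R$; (b) let $\zeta_j=\lim_{c\to\infty}\alpha_j(c)$ for $j=1,2,3$ and $\lambda^*=\frac{\zeta_3}{1-\zeta_1-\zeta_2}$. If $\lambda<\lambda^*$, then there is $c^*\in\mathbb N$, $c^*\ge1$, such that the first term $\alpha_1(c)w(c+1)+\alpha_2(c)w(c-1)+\alpha_3(c)$ in the minimum in $(\ast)$ (with $w$ the bounded solution) is strictly bigger than $\lambda$ if and only if $c\ge c^*$. If $\lambda\ge\lambda^*$, then this first term is not bigger than $\lambda$, and hence equals $w(c)$, for all $c\in\mathbb N$. *)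

theory Defs
  imports Complex_Main
begin

definition first_term :: "(nat \<Rightarrow> real) \<Rightarrow> (nat \<Rightarrow> real) \<Rightarrow> (nat \<Rightarrow> real) \<Rightarrow> (nat \<Rightarrow> real) \<Rightarrow> nat \<Rightarrow> real" where
  "first_term a1 a2 a3 w c =
     a1 c * w (c + 1) + (if c = 0 then 0 else a2 c * w (c - 1)) + a3 c"

definition solves_eq :: "(nat \<Rightarrow> real) \<Rightarrow> (nat \<Rightarrow> real) \<Rightarrow> (nat \<Rightarrow> real) \<Rightarrow> real \<Rightarrow> (nat \<Rightarrow> real) \<Rightarrow> bool" where
  "solves_eq a1 a2 a3 lam w \<longleftrightarrow> (\<forall>c. w c = min (first_term a1 a2 a3 w c) lam)"

definition bounded_fun :: "(nat \<Rightarrow> real) \<Rightarrow> bool" where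
  "bounded_fun w \<longleftrightarrow> (\<exists>B. \<forall>c. \<bar>w c\<bar> \<le> B)"

end

theory Submission
  imports Defs
begin

text \<open>
  Existence comes from value iteration started at 0: the operator
  w \<mapsto> min (first_term w) lam is monotone, so its iterates increase to a solution with
  values in [0, lam], and by induction they are increasing in c as well, hence so is the
  solution. Since a1 + a2 \<le> z1 + z2 < 1 for the limits zj of the aj, the operator is a
  contraction for the supremum distance, which gives uniqueness among bounded functions.

  For (b), the first term is increasing in c and vanishes at 0, so the set where it exceeds
  lam is a final segment [c*, \<infinity>) with c* \<ge> 1, possibly empty. If it is empty, the solution
  is a fixed point of the first term, and passing to the limit in that equation shows that
  the limit of the solution is lam*; as this limit is at most lam, we get lam \<ge> lam*.
  Conversely, once the first term exceeds lam the solution equals lam from there on, and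
  then the first term one step later is at most z1 lam + z2 lam + z3, which is \<le> lam
  whenever lam \<ge> lam*; together with monotonicity this rules out crossing lam at all.
\<close>

lemma incseq_bounded_fun_tendsto_lim:
  fixes a :: "nat \<Rightarrow> real"
  assumes "bounded_fun a" and "mono a"
  shows "a \<longlonglongrightarrow> lim a" and "a c \<le> lim a"
proof -
  obtain B where "\<forall>c. a c \<le> B"
    using assms(1) unfolding bounded_fun_def by (meson abs_le_D1)
  then obtain L where "a \<longlonglongrightarrow> L"
    using incseq_convergent assms(2) by blast
  moreover from this have "lim a = L"
    by (rule limI)
  ultimately show "a \<longlonglongrightarrow> lim a" and "a c \<le> lim a"
    using incseq_le assms(2) by auto
qed

lemma mono_threshold_nat:
  fixes f :: "nat \<Rightarrow> 'a::linorder"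
  assumes "mono f" and "f 0 \<le> t" and "t < f c"
  obtains c\<^sub>0 where "1 \<le> c\<^sub>0" and "\<And>c. t < f c \<longleftrightarrow> c\<^sub>0 \<le> c"
proof
  let ?c\<^sub>0 = "LEAST c. t < f c"
  have "t < f ?c\<^sub>0"
    using assms(3) by (rule LeastI)
  then show "1 \<le> ?c\<^sub>0"
    using assms(2) by (metis leD less_one not_less)
  show "t < f c \<longleftrightarrow> ?c\<^sub>0 \<le> c" for c
    using Least_le[of "\<lambda>c. t < f c" c] monoD[OF assms(1), of ?c\<^sub>0 c] \<open>t < f ?c\<^sub>0\<close>
    by (auto intro: less_le_trans)
qed

lemma first_term_mono_fun:
  assumes "\<And>c. a1 c \<ge> 0" and "\<And>c. a2 c \<ge> 0" and "\<And>c. w c \<le> v c"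
  shows "first_term a1 a2 a3 w c \<le> first_term a1 a2 a3 v c"
  using assms by (auto simp: first_term_def intro!: add_mono mult_left_mono)

lemma mono_first_term:
  assumes a1: "\<And>c. a1 c \<ge> 0" "mono a1" and a2: "\<And>c. a2 c \<ge> 0" "mono a2"
    and a3: "mono a3" and w: "\<And>c. w c \<ge> 0" "mono w"
  shows "mono (first_term a1 a2 a3 w)"
proof (rule incseq_SucI)
  fix c
  have "a1 c * w (c + 1) \<le> a1 (Suc c) * w (Suc c + 1)"
    using a1 w by (intro mult_mono) (auto simp: monoD)
  moreover have "(if c = 0 then 0 else a2 c * w (c - 1)) \<le> a2 (Suc c) * w c"
    using a2 w by (auto intro!: mult_mono simp: monoD)
  moreover have "a3 c \<le> a3 (Suc c)"
    using a3 by (simp add: monoD)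
  ultimately show "first_term a1 a2 a3 w c \<le> first_term a1 a2 a3 w (Suc c)"
    by (simp add: first_term_def)
qed

lemma first_term_tendsto:
  assumes "\<And>c. (\<lambda>n. W n c) \<longlonglongrightarrow> w c"
  shows "(\<lambda>n. first_term a1 a2 a3 (W n) c) \<longlonglongrightarrow> first_term a1 a2 a3 w c"
  unfolding first_term_def by (cases "c = 0") (auto intro!: tendsto_intros assms)

lemma first_term_diff_le:
  assumes "\<And>c. a1 c \<ge> 0" and "\<And>c. a2 c \<ge> 0" and "0 \<le> D"
    and "\<And>c. \<bar>v c - w c\<bar> \<le> D"
  shows "\<bar>first_term a1 a2 a3 v c - first_term a1 a2 a3 w c\<bar> \<le> (a1 c + a2 c) * D"
proof -
  let ?d1 = "a1 c * (v (c + 1) - w (c + 1))"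
  let ?d2 = "if c = 0 then 0 else a2 c * (v (c - 1) - w (c - 1))"
  have diff: "first_term a1 a2 a3 v c - first_term a1 a2 a3 w c = ?d1 + ?d2"
    by (simp add: first_term_def algebra_simps)
  have "\<bar>?d1\<bar> \<le> a1 c * D" and "\<bar>?d2\<bar> \<le> a2 c * D"
    using assms by (simp_all add: abs_mult mult_left_mono)
  then have "\<bar>?d1 + ?d2\<bar> \<le> a1 c * D + a2 c * D"
    using abs_triangle_ineq[of ?d1 ?d2] by linarith
  then show ?thesis
    unfolding diff by (simp add: distrib_right)
qed

lemma solves_eq_exists_mono:
  assumes a1: "\<And>c. a1 c \<ge> 0" "mono a1" and a2: "\<And>c. a2 c \<ge> 0" "mono a2"
    and a3: "\<And>c. a3 c \<ge> 0" "mono a3" and "0 \<le> lam"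
  obtains w where "solves_eq a1 a2 a3 lam w" and "\<And>c. 0 \<le> w c" and "\<And>c. w c \<le> lam"
    and "mono w"
proof -
  define T where "T w c = min (first_term a1 a2 a3 w c) lam" for w c
  define W where "W n = (T ^^ n) (\<lambda>_. 0)" for n
  have W_Suc: "W (Suc n) = T (W n)" for n
    by (simp add: W_def)
  have T_mono: "T v c \<le> T u c" if "\<And>c. v c \<le> u c" for u v c
    unfolding T_def using a1(1) a2(1) that by (intro min.mono first_term_mono_fun) auto
  have W_le_lam: "W n c \<le> lam" for n c
    using \<open>0 \<le> lam\<close> by (cases n) (auto simp: W_Suc W_def T_def)
  have W_incseq: "incseq (\<lambda>n. W n c)" for c
  proof -
    have "W n c \<le> W (Suc n) c" for n
    proof (induction n arbitrary: c)
      case 0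
      show ?case using a3 \<open>0 \<le> lam\<close> by (simp add: W_def T_def first_term_def)
    next
      case (Suc n)
      then show ?case
        using T_mono[of "W n" "W (Suc n)"] by (simp only: W_Suc)
    qed
    then show ?thesis by (rule incseq_SucI)
  qed
  have W_nonneg: "0 \<le> W n c" for n c
    using monoD[OF W_incseq, of 0 n] by (simp add: W_def)
  have W_mono: "mono (W n)" for n
  proof (induction n)
    case 0
    show ?case by (simp add: W_def mono_def)
  next
    case (Suc n)
    have "mono (first_term a1 a2 a3 (W n))"
      using a1 a2 a3 W_nonneg Suc by (intro mono_first_term)
    then show ?case
      unfolding W_Suc T_def mono_def by (meson min.mono order_refl)
  qed
  define w where "w c = lim (\<lambda>n. W n c)" for c
  have W_tendsto: "(\<lambda>n. W n c) \<longlonglongrightarrow> w c" for c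
    using incseq_bounded_fun_tendsto_lim(1)[OF _ W_incseq] W_le_lam W_nonneg
    unfolding w_def bounded_fun_def by (metis abs_of_nonneg)
  have "solves_eq a1 a2 a3 lam w"
    unfolding solves_eq_def
  proof
    fix c
    have "(\<lambda>n. W (Suc n) c) \<longlonglongrightarrow> min (first_term a1 a2 a3 w c) lam"
      unfolding W_Suc T_def by (intro tendsto_intros first_term_tendsto W_tendsto)
    then show "w c = min (first_term a1 a2 a3 w c) lam"
      using LIMSEQ_unique LIMSEQ_Suc[OF W_tendsto] by blast
  qed
  moreover have "0 \<le> w c" and "w c \<le> lam" for c
    using W_tendsto[of c] W_nonneg W_le_lam
    by (auto intro: LIMSEQ_le_const LIMSEQ_le_const2)
  moreover have "mono w"
    unfolding mono_def by (auto intro!: LIMSEQ_le[OF W_tendsto W_tendsto] monoD[OF W_mono])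
  ultimately show thesis ..
qed

lemma solves_eq_unique:
  assumes "\<And>c. a1 c \<ge> 0" and "\<And>c. a2 c \<ge> 0" and "\<And>c. a1 c + a2 c \<le> q" and "q < 1"
    and "bounded_fun v" "solves_eq a1 a2 a3 lam v"
    and "bounded_fun w" "solves_eq a1 a2 a3 lam w"
  shows "v = w"
proof -
  obtain B\<^sub>v B\<^sub>w where "\<And>c. \<bar>v c\<bar> \<le> B\<^sub>v" and "\<And>c. \<bar>w c\<bar> \<le> B\<^sub>w"
    using assms(5,7) unfolding bounded_fun_def by blast
  then have "\<bar>v c - w c\<bar> \<le> B\<^sub>v + B\<^sub>w" for c
    using abs_triangle_ineq4[of "v c" "w c"] by (meson add_mono order_trans)
  then have "bdd_above (range (\<lambda>c. \<bar>v c - w c\<bar>))"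
    by (rule bdd_aboveI2)
  define D where "D = (SUP c. \<bar>v c - w c\<bar>)"
  have dist_le: "\<bar>v c - w c\<bar> \<le> D" for c
    unfolding D_def using \<open>bdd_above _\<close> by (rule cSUP_upper[OF UNIV_I])
  have "0 \<le> D"
    using dist_le[of 0] by simp
  have "\<bar>v c - w c\<bar> \<le> q * D" for c
  proof -
    have "\<bar>v c - w c\<bar> \<le> \<bar>first_term a1 a2 a3 v c - first_term a1 a2 a3 w c\<bar>"
      using assms(6,8) unfolding solves_eq_def by (simp add: min_def abs_if)
    also have "\<dots> \<le> (a1 c + a2 c) * D"
      using assms(1,2) \<open>0 \<le> D\<close> dist_le by (rule first_term_diff_le)
    also have "\<dots> \<le> q * D"
      using assms(3) \<open>0 \<le> D\<close> by (rule mult_right_mono)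
    finally show ?thesis .
  qed
  then have "D \<le> q * D"
    unfolding D_def by (rule cSUP_least[OF UNIV_not_empty])
  then have "(1 - q) * D \<le> 0"
    by (simp add: algebra_simps)
  then have "D \<le> 0"
    using \<open>q < 1\<close> by (simp add: mult_le_0_iff)
  show ?thesis
  proof
    fix c
    show "v c = w c"
      using dist_le[of c] \<open>D \<le> 0\<close> by linarith
  qed
qed

lemma first_term_fixpoint_limit:
  assumes "a1 \<longlonglongrightarrow> z1" and "a2 \<longlonglongrightarrow> z2" and "a3 \<longlonglongrightarrow> z3" and "z1 + z2 \<noteq> 1"
    and "w \<longlonglongrightarrow> L" and "\<And>c. w c = first_term a1 a2 a3 w c"
  shows "L = z3 / (1 - z1 - z2)"
proof -
  have "(\<lambda>c. first_term a1 a2 a3 w (Suc c)) \<longlonglongrightarrow> z1 * L + z2 * L + z3"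
    unfolding first_term_def
    by (auto intro!: tendsto_intros LIMSEQ_ignore_initial_segment[where k = 1, simplified] assms)
  moreover have "(\<lambda>c. first_term a1 a2 a3 w (Suc c)) \<longlonglongrightarrow> L"
    unfolding assms(6)[symmetric] using assms(5) by (rule LIMSEQ_Suc)
  ultimately have "L = z1 * L + z2 * L + z3"
    using LIMSEQ_unique by blast
  then show ?thesis
    using assms(4) by (simp add: field_simps)
qed

lemma first_term_le_lam:
  assumes "mono (first_term a1 a2 a3 w)" and "solves_eq a1 a2 a3 lam w"
    and "\<And>c. a1 c \<le> z1" and "\<And>c. a2 c \<le> z2" and "\<And>c. a3 c \<le> z3"
    and "0 \<le> lam" and "z3 \<le> lam * (1 - z1 - z2)"
  shows "first_term a1 a2 a3 w c \<le> lam"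
proof (rule ccontr)
  let ?F = "first_term a1 a2 a3 w"
  assume "\<not> ?F c \<le> lam"
  then have w_eq_lam: "w d = lam" if "c \<le> d" for d
    using assms(2) monoD[OF assms(1) that] unfolding solves_eq_def by (simp add: min_def)
  have "?F (Suc c) = a1 (Suc c) * lam + a2 (Suc c) * lam + a3 (Suc c)"
    using w_eq_lam[of c] w_eq_lam[of "c + 2"] by (simp add: first_term_def)
  also have "\<dots> \<le> z1 * lam + z2 * lam + z3"
    using assms(3-6) by (intro add_mono mult_right_mono)
  also have "\<dots> \<le> lam"
    using assms(7) by (simp add: algebra_simps)
  finally show False
    using monoD[OF assms(1), of c "Suc c"] \<open>\<not> ?F c \<le> lam\<close> by simp
qed

lemma solves_eq_first_term_exceeds:
  assumes "a1 \<longlonglongrightarrow> z1" and "a2 \<longlonglongrightarrow> z2" and "a3 \<longlonglongrightarrow> z3" and "z1 + z2 \<noteq> 1"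
    and "solves_eq a1 a2 a3 lam w" and "\<And>c. w c \<le> lam" and "mono w"
    and "lam < z3 / (1 - z1 - z2)"
  shows "\<exists>c. lam < first_term a1 a2 a3 w c"
proof (rule ccontr)
  assume "\<not> (\<exists>c. lam < first_term a1 a2 a3 w c)"
  then have "w c = first_term a1 a2 a3 w c" for c
    using assms(5) unfolding solves_eq_def by (simp add: not_less min_absorb1)
  moreover obtain L where "w \<longlonglongrightarrow> L"
    using incseq_convergent[of w lam] assms(6,7) by blast
  ultimately have "L = z3 / (1 - z1 - z2)"
    using assms(1-4) by (intro first_term_fixpoint_limit) auto
  moreover have "L \<le> lam"
    using \<open>w \<longlonglongrightarrow> L\<close> assms(6) by (intro LIMSEQ_le_const2) auto
  ultimately show False
    using assms(8) by simp
qed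

lemma solves_eq_first_term_threshold:
  fixes a1 a2 a3 w :: "nat \<Rightarrow> real"
  assumes a1: "\<And>c. a1 c \<ge> 0" "mono a1" "a1 0 = 0" and a2: "\<And>c. a2 c \<ge> 0" "mono a2"
    and a3: "mono a3" "a3 0 = 0"
    and lim: "a1 \<longlonglongrightarrow> z1" "a2 \<longlonglongrightarrow> z2" "a3 \<longlonglongrightarrow> z3" and "z1 + z2 < 1" and "0 \<le> lam"
    and w: "solves_eq a1 a2 a3 lam w" "\<And>c. 0 \<le> w c" "\<And>c. w c \<le> lam" "mono w"
  shows "lam < z3 / (1 - z1 - z2) \<Longrightarrow>
      \<exists>c\<^sub>0\<ge>1. \<forall>c. lam < first_term a1 a2 a3 w c \<longleftrightarrow> c\<^sub>0 \<le> c"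
    and "z3 / (1 - z1 - z2) \<le> lam \<Longrightarrow>
      first_term a1 a2 a3 w c \<le> lam \<and> w c = first_term a1 a2 a3 w c"
proof -
  let ?F = "first_term a1 a2 a3 w"
  have F_mono: "mono ?F"
    using a1(1,2) a2 a3(1) w(2,4) by (rule mono_first_term)
  have w_eq: "w c = min (?F c) lam" for c
    using w(1) unfolding solves_eq_def by simp
  have "0 < 1 - z1 - z2"
    using \<open>z1 + z2 < 1\<close> by simp
  show "\<exists>c\<^sub>0\<ge>1. \<forall>c. lam < ?F c \<longleftrightarrow> c\<^sub>0 \<le> c" if "lam < z3 / (1 - z1 - z2)"
  proof -
    have "\<exists>c. lam < ?F c"
      using lim \<open>z1 + z2 < 1\<close> w(1,3,4) that by (intro solves_eq_first_term_exceeds) auto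
    moreover have "?F 0 \<le> lam"
      using a1(3) a3(2) \<open>0 \<le> lam\<close> by (simp add: first_term_def)
    ultimately show ?thesis
      using mono_threshold_nat[OF F_mono] by metis
  qed
  show "?F c \<le> lam \<and> w c = ?F c" if "z3 / (1 - z1 - z2) \<le> lam"
  proof -
    have "z3 \<le> lam * (1 - z1 - z2)"
      using that \<open>0 < 1 - z1 - z2\<close> by (simp add: divide_le_eq)
    then have "?F c \<le> lam"
      using F_mono w(1) incseq_le[OF a1(2) lim(1)] incseq_le[OF a2(2) lim(2)]
        incseq_le[OF a3(1) lim(3)] \<open>0 \<le> lam\<close> by (intro first_term_le_lam) auto
    then show ?thesis
      using w_eq by simp
  qed
qed

theorem lemma5p2:
  fixes a1 a2 a3 :: "nat \<Rightarrow> real" and lam :: real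
  assumes nonneg: "\<And>c. a1 c \<ge> 0" "\<And>c. a2 c \<ge> 0" "\<And>c. a3 c \<ge> 0"
    and bdd: "bounded_fun a1" "bounded_fun a2" "bounded_fun a3"
    and incr: "mono a1" "mono a2" "mono a3"
    and zero: "a1 0 = 0" "a2 0 = 0" "a3 0 = 0"
    and lim_lt: "lim (\<lambda>c. a1 c + a2 c) < 1"
    and lam_pos: "lam > 0"
  shows "(\<exists>!w. bounded_fun w \<and> solves_eq a1 a2 a3 lam w)
    \<and> (\<forall>w. bounded_fun w \<and> solves_eq a1 a2 a3 lam w \<longrightarrow>
          (let lamstar = lim a3 / (1 - lim a1 - lim a2) in
            (lam < lamstar \<longrightarrow>
               (\<exists>cstar::nat. cstar \<ge> 1 \<and>
                  (\<forall>c. first_term a1 a2 a3 w c > lam \<longleftrightarrow> c \<ge> cstar)))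
          \<and> (lam \<ge> lamstar \<longrightarrow>
               (\<forall>c. first_term a1 a2 a3 w c \<le> lam \<and> w c = first_term a1 a2 a3 w c))))"
proof -
  have lim: "a1 \<longlonglongrightarrow> lim a1" "a2 \<longlonglongrightarrow> lim a2" "a3 \<longlonglongrightarrow> lim a3"
    using bdd incr by (auto intro: incseq_bounded_fun_tendsto_lim)
  have "lim (\<lambda>c. a1 c + a2 c) = lim a1 + lim a2"
    using lim by (intro limI tendsto_add)
  then have sum_lt: "lim a1 + lim a2 < 1"
    using lim_lt by simp
  have sum_le: "a1 c + a2 c \<le> lim a1 + lim a2" for c
    using bdd incr by (intro add_mono incseq_bounded_fun_tendsto_lim(2))
  have "0 \<le> lam"
    using lam_pos by simp
  obtain w where w: "solves_eq a1 a2 a3 lam w" "\<And>c. 0 \<le> w c" "\<And>c. w c \<le> lam" "mono w"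
    by (rule solves_eq_exists_mono[OF nonneg(1) incr(1) nonneg(2) incr(2) nonneg(3) incr(3)
        \<open>0 \<le> lam\<close>]) blast
  have "bounded_fun w"
    unfolding bounded_fun_def using w(2,3) by (metis abs_of_nonneg)
  have unique: "v = w" if "bounded_fun v" "solves_eq a1 a2 a3 lam v" for v
    using nonneg(1,2) sum_le sum_lt that \<open>bounded_fun w\<close> w(1) by (rule solves_eq_unique)
  note threshold = solves_eq_first_term_threshold[OF nonneg(1) incr(1) zero(1) nonneg(2) incr(2)
      incr(3) zero(3) lim sum_lt \<open>0 \<le> lam\<close> w]
  show ?thesis
    using \<open>bounded_fun w\<close> w(1) unique threshold unfolding Let_def by blast
qed

end
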